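(* Let $(E,p,X)$ be an étalé space with $X$ a Boolean space. Then $(E,p,X)$ is isomorphic to its double dual $E^{\ast\ast}\to X^{\ast\ast}$ via the map $\beta\colon E\to E^{\ast\ast}$, $a\mapsto K_a=\{x\in E^{\ast}: a\in x\}$ (together with $X\to X^{\ast\ast}$, $u\mapsto N_u=\{y\in X^{\ast}: u\in y\}$).
   Context: A Boolean space is a Hausdorff space with a basis of compact-open sets. An étalé space $(E,p,X)$ is a surjective local homeomorphism $p\colon E\to X$. Its dual Boolean set is $\widetilde p\colon E^{\ast}\to X^{\ast}$, where $X^{\ast}$ is the Boolean algebra of compact-open subsets of $X$, $E^{\ast}$ the set of compact-open local sections (open sets on which $p$ is injective), $\widetilde p(C)=p(C)$, with order $C\le D$ iff $C\subseteq D$ (equivalently $C=D\cap p^{-1}(p(C))$). The dual étalé space of a Boolean set $q\colon Y\to B$ is $\widetilde q\colon Y^{\ast}\to B^{\ast}$ where $Y^{\ast}$ is the set of ultrafilters (maximal proper non-empty down-directed upward-closed subsets) of $Y$ with basis $L(a)=\{G:a\in G\}$, $B^{\ast}$ the ultrafilters of $B$ with basis $M(b)=\{F:b\in F\}$, and $\widetilde q(G)=q(G)$. $E^{\ast\ast}\to X^{\ast\ast}$ is the dual étalé space of $E^{\ast}\to X^{\ast}$. Two étalé spaces $(E,f,X)$, $(F,g,Y)$ are isomorphic if there are homeomorphisms $\varphi\colon E\to F$, $\psi\colon X\to Y$ with $g\varphi=\psi f$. *)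

theory Defs
  imports "HOL-Analysis.Analysis"
begin

definition boolean_space :: "'a topology \<Rightarrow> bool" where
  "boolean_space X \<longleftrightarrow> Hausdorff_space X \<and>
     (\<forall>U x. openin X U \<and> x \<in> U \<longrightarrow> (\<exists>C. compactin X C \<and> openin X C \<and> x \<in> C \<and> C \<subseteq> U))"

definition etale_space :: "'a topology \<Rightarrow> ('a \<Rightarrow> 'b) \<Rightarrow> 'b topology \<Rightarrow> bool" where
  "etale_space E p X \<longleftrightarrow> p ` topspace E = topspace X \<and>
     (\<forall>a\<in>topspace E. \<exists>U. openin E U \<and> a \<in> U \<and> openin X (p ` U) \<and>
        homeomorphic_map (subtopology E U) (subtopology X (p ` U)) p)"

definition compact_opens :: "'b topology \<Rightarrow> 'b set set" where
  "compact_opens X = {C. compactin X C \<and> openin X C}"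

definition local_sections :: "'a topology \<Rightarrow> ('a \<Rightarrow> 'b) \<Rightarrow> 'a set set" where
  "local_sections E p = {C. compactin E C \<and> openin E C \<and> inj_on p C}"

definition pfilter :: "'c set \<Rightarrow> ('c \<Rightarrow> 'c \<Rightarrow> bool) \<Rightarrow> 'c set \<Rightarrow> bool" where
  "pfilter Y le F \<longleftrightarrow> F \<subseteq> Y \<and> F \<noteq> {} \<and> F \<noteq> Y \<and>
     (\<forall>a\<in>F. \<forall>b\<in>Y. le a b \<longrightarrow> b \<in> F) \<and>
     (\<forall>a\<in>F. \<forall>b\<in>F. \<exists>c\<in>F. le c a \<and> le c b)"

definition ultrafilters :: "'c set \<Rightarrow> ('c \<Rightarrow> 'c \<Rightarrow> bool) \<Rightarrow> 'c set set" where
  "ultrafilters Y le = {F. pfilter Y le F \<and> (\<forall>G. pfilter Y le G \<and> F \<subseteq> G \<longrightarrow> G = F)}"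

definition dual_E_top :: "'a topology \<Rightarrow> ('a \<Rightarrow> 'b) \<Rightarrow> 'a set set topology" where
  "dual_E_top E p = topology_generated_by
     ((\<lambda>c. {G \<in> ultrafilters (local_sections E p) (\<subseteq>). c \<in> G}) ` local_sections E p)"

definition dual_X_top :: "'b topology \<Rightarrow> 'b set set topology" where
  "dual_X_top X = topology_generated_by
     ((\<lambda>b. {F \<in> ultrafilters (compact_opens X) (\<subseteq>). b \<in> F}) ` compact_opens X)"

definition dual_proj :: "('a \<Rightarrow> 'b) \<Rightarrow> 'a set set \<Rightarrow> 'b set set" where
  "dual_proj p G = (\<lambda>C. p ` C) ` G"

end

theory Submission
  imports Defs
begin

text \<open>Over a Boolean base the compact-open local sections form a basis of \<open>E\<close>. Gluing a section
  \<open>S\<close> to the part of a section \<open>D\<close> lying outside the fibres over \<open>p S\<close> gives again a section,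
  so every compact-open subset of \<open>X\<close> is the image of a section. An ultrafilter \<open>G\<close> of sections
  contains some section \<open>C\<close>; by compactness of \<open>p C\<close> the images of the members of \<open>G\<close> below
  \<open>C\<close> share a point \<open>p a\<close> with \<open>a \<in> C\<close>, and maximality forces \<open>G = K\<^sub>a\<close>. Hence \<open>a \<mapsto> K\<^sub>a\<close>
  is a bijection onto \<open>E\<^sup>*\<^sup>*\<close> sending the basis of sections onto the basis \<open>L(c)\<close>, i.e. a
  homeomorphism; the etale space \<open>id: X \<rightarrow> X\<close> gives \<open>X \<cong> X\<^sup>*\<^sup>*\<close>.\<close>

lemma homeomorphic_map_topology_generated_by_image_base:
  assumes base_open: "\<And>c. c \<in> B \<Longrightarrow> openin E c"
    and base: "\<And>W a. openin E W \<Longrightarrow> a \<in> W \<Longrightarrow> \<exists>c\<in>B. a \<in> c \<and> c \<subseteq> W"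
    and inj: "inj_on f (topspace E)"
  shows "homeomorphic_map E (topology_generated_by ((\<lambda>c. f ` c) ` B)) f"
proof -
  let ?S = "(\<lambda>c. f ` c) ` B"
  have B_sub: "c \<subseteq> topspace E" if "c \<in> B" for c
    using base_open[OF that] openin_subset by blast
  have image_top: "f ` topspace E = \<Union>?S"
  proof
    show "f ` topspace E \<subseteq> \<Union>?S"
      using base[OF openin_topspace] by blast
    show "\<Union>?S \<subseteq> f ` topspace E"
      using B_sub by blast
  qed
  have image_open: "openin (topology_generated_by ?S) (f ` W)" if W: "openin E W" for W
  proof -
    have "f ` W = \<Union>((\<lambda>c. f ` c) ` {c \<in> B. c \<subseteq> W})"
      using base[OF W] by blast
    moreover have "openin (topology_generated_by ?S) (\<Union>((\<lambda>c. f ` c) ` {c \<in> B. c \<subseteq> W}))"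
      by (rule openin_Union) (auto intro: topology_generated_by_Basis)
    ultimately show ?thesis by simp
  qed
  show ?thesis
  proof (rule bijective_open_imp_homeomorphic_map)
    show "continuous_map E (topology_generated_by ?S) f"
    proof (rule continuous_on_generated_topo)
      fix U assume "U \<in> ?S"
      then obtain c where c: "c \<in> B" "U = f ` c" by blast
      have "f -` U \<inter> topspace E = c"
        using c(2) B_sub[OF c(1)] inj by (auto dest: inj_onD)
      then show "openin E (f -` U \<inter> topspace E)"
        using base_open c(1) by simp
    qed (use image_top in simp)
    show "open_map E (topology_generated_by ?S) f"
      using image_open by (simp add: open_map_def)
  qed (use image_top inj in simp_all)
qed

lemma pfilter_empty_notin:
  assumes "pfilter Y (\<subseteq>) F" "{} \<in> Y"
  shows "{} \<notin> F"
  using assms unfolding pfilter_def by blast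

lemma pfilter_finite_lower_bound:
  assumes F: "pfilter Y (\<subseteq>) F" and "finite A" "A \<subseteq> F"
  shows "\<exists>c\<in>F. \<forall>a\<in>A. c \<subseteq> a"
  using \<open>finite A\<close> \<open>A \<subseteq> F\<close>
proof (induction A rule: finite_induct)
  case empty
  then show ?case using F unfolding pfilter_def by blast
next
  case (insert x A)
  then obtain c where "c \<in> F" "\<forall>a\<in>A. c \<subseteq> a" by blast
  moreover obtain d where "d \<in> F" "d \<subseteq> x" "d \<subseteq> c"
    using F insert.prems \<open>c \<in> F\<close> unfolding pfilter_def by blast
  ultimately show ?case by blast
qed

locale etale =
  fixes E :: "'a topology" and p :: "'a \<Rightarrow> 'b" and X :: "'b topology"
  assumes etale_space: "etale_space E p X"
begin

abbreviation sections :: "'a set set" where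
  "sections \<equiv> local_sections E p"

lemma image_topspace: "p ` topspace E = topspace X"
  using etale_space unfolding etale_space_def by blast

lemma local_homeomorphism:
  assumes "a \<in> topspace E"
  obtains U where "openin E U" "a \<in> U" "openin X (p ` U)"
    "homeomorphic_map (subtopology E U) (subtopology X (p ` U)) p"
  using etale_space assms unfolding etale_space_def by blast

lemma continuous_map_projection: "continuous_map E X p"
proof (rule pasting_lemma)
  let ?I = "{U. openin E U \<and> homeomorphic_map (subtopology E U) (subtopology X (p ` U)) p}"
  show "continuous_map (subtopology E U) X p" if "U \<in> ?I" for U
    using that homeomorphic_imp_continuous_map continuous_map_into_fulltopology by blast
  show "\<exists>U. U \<in> ?I \<and> a \<in> U \<and> p a = p a" if "a \<in> topspace E" for a
    using local_homeomorphism[OF that] by blast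
qed auto

lemma open_map_projection: "open_map E X p"
  unfolding open_map_def
proof (intro allI impI)
  fix W assume W: "openin E W"
  show "openin X (p ` W)"
  proof (subst openin_subopen, intro ballI)
    fix y assume "y \<in> p ` W"
    then obtain a where a: "a \<in> W" "y = p a" by blast
    obtain U where U: "openin E U" "a \<in> U" "openin X (p ` U)"
      and h: "homeomorphic_map (subtopology E U) (subtopology X (p ` U)) p"
      using local_homeomorphism a openin_subset[OF W] by blast
    have "openin (subtopology E U) (W \<inter> U)"
      using W by (simp add: openin_subtopology_Int)
    then have "openin (subtopology X (p ` U)) (p ` (W \<inter> U))"
      using h homeomorphic_imp_open_map open_map_def by blast
    then have "openin X (p ` (W \<inter> U))"
      using U(3) openin_trans_full by blast
    then show "\<exists>T. openin X T \<and> y \<in> T \<and> T \<subseteq> p ` W"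
      using a U(2) by blast
  qed
qed

lemma openin_preimage: "openin X V \<Longrightarrow> openin E {x \<in> topspace E. p x \<in> V}"
  using continuous_map_projection openin_continuous_map_preimage by blast

lemma homeomorphic_map_open_section:
  assumes C: "openin E C" and inj: "inj_on p C"
  shows "homeomorphic_map (subtopology E C) (subtopology X (p ` C)) p"
proof (rule bijective_open_imp_homeomorphic_map)
  have C_top: "C \<subseteq> topspace E" using openin_subset[OF C] .
  then show "continuous_map (subtopology E C) (subtopology X (p ` C)) p"
    by (simp add: continuous_map_in_subtopology continuous_map_from_subtopology
        continuous_map_projection)
  show "open_map (subtopology E C) (subtopology X (p ` C)) p"
    using open_map_into_subtopology[OF open_map_from_subtopology[OF open_map_projection C]] by auto
  show "p ` topspace (subtopology E C) = topspace (subtopology X (p ` C))"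
    using C_top image_topspace by auto
  show "inj_on p (topspace (subtopology E C))"
    using inj C_top by (simp add: inf_absorb2)
qed

lemma compactin_subset_open_section:
  assumes C: "openin E C" and inj: "inj_on p C" and S: "S \<subseteq> C" and K: "compactin X (p ` S)"
  shows "compactin E S"
proof -
  have "S \<subseteq> topspace (subtopology E C)"
    using S openin_subset[OF C] by auto
  moreover have "compactin (subtopology X (p ` C)) (p ` S)"
    using K S by (simp add: compactin_subtopology image_mono)
  ultimately have "compactin (subtopology E C) S"
    using homeomorphic_map_compactness[OF homeomorphic_map_open_section[OF C inj]] by blast
  then show ?thesis by (simp add: compactin_subtopology)
qed

end

locale boolean_etale = etale +
  assumes boolean_base: "boolean_space X"
begin

lemma Hausdorff_base: "Hausdorff_space X"
  using boolean_base unfolding boolean_space_def by blast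

lemma compact_open_base:
  "openin X U \<Longrightarrow> x \<in> U \<Longrightarrow> \<exists>C. compactin X C \<and> openin X C \<and> x \<in> C \<and> C \<subseteq> U"
  using boolean_base unfolding boolean_space_def by blast

lemma local_sectionsD:
  assumes "C \<in> sections"
  shows "openin E C" "compactin E C" "inj_on p C" "C \<subseteq> topspace E"
    "compactin X (p ` C)" "openin X (p ` C)" "closedin X (p ` C)"
proof -
  show o: "openin E C" "compactin E C" "inj_on p C"
    using assms unfolding local_sections_def by auto
  then show "C \<subseteq> topspace E" using openin_subset by blast
  show k: "compactin X (p ` C)" using o image_compactin continuous_map_projection by blast
  show "openin X (p ` C)" using o open_map_projection by (simp add: open_map_def)
  show "closedin X (p ` C)" using k Hausdorff_base compactin_imp_closedin by blast
qed

lemma empty_in_sections: "{} \<in> sections"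
  unfolding local_sections_def by auto

lemma sections_base:
  assumes W: "openin E W" and a: "a \<in> W"
  shows "\<exists>C\<in>sections. a \<in> C \<and> C \<subseteq> W"
proof -
  have "a \<in> topspace E" using a openin_subset[OF W] by blast
  then obtain U where U: "openin E U" "a \<in> U"
    and h: "homeomorphic_map (subtopology E U) (subtopology X (p ` U)) p"
    by (rule local_homeomorphism)
  have "inj_on p U"
    using homeomorphic_imp_injective_map[OF h] openin_subset[OF U(1)] by (simp add: inf_absorb2)
  then have W': "openin E (W \<inter> U)" "inj_on p (W \<inter> U)"
    using W U(1) by (auto intro: inj_on_subset)
  then have "openin X (p ` (W \<inter> U))"
    using open_map_projection by (simp add: open_map_def)
  then obtain K where K: "compactin X K" "openin X K" "p a \<in> K" "K \<subseteq> p ` (W \<inter> U)"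
    using compact_open_base a U(2) by blast
  define C where "C = W \<inter> U \<inter> {x \<in> topspace E. p x \<in> K}"
  have C: "openin E C" "inj_on p C"
    using W' openin_preimage[OF K(2)] unfolding C_def by (auto intro: inj_on_subset)
  moreover have "p ` C = K"
    using K(4) openin_subset[OF W] unfolding C_def by auto
  then have "compactin E C"
    using compactin_subset_open_section[OF C] K(1) by blast
  moreover have "a \<in> C" "C \<subseteq> W"
    using a U K openin_subset[OF W] unfolding C_def by auto
  ultimately show ?thesis
    unfolding local_sections_def by blast
qed

lemma openin_outside_image:
  assumes S: "S \<in> sections" and D: "openin E D"
  shows "openin E {x \<in> D. p x \<notin> p ` S}"
proof -
  have "openin X (topspace X - p ` S)"
    using local_sectionsD(7)[OF S] by blast
  then have "openin E (D \<inter> {x \<in> topspace E. p x \<in> topspace X - p ` S})"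
    using D openin_preimage by blast
  moreover have "D \<inter> {x \<in> topspace E. p x \<in> topspace X - p ` S} = {x \<in> D. p x \<notin> p ` S}"
    using openin_subset[OF D] image_topspace by auto
  ultimately show ?thesis by simp
qed

lemma section_union_outside:
  assumes S: "S \<in> sections" and D: "D \<in> sections"
  shows "S \<union> {x \<in> D. p x \<notin> p ` S} \<in> sections"
    and "p ` (S \<union> {x \<in> D. p x \<notin> p ` S}) = p ` S \<union> p ` D"
proof -
  define R where "R = {x \<in> D. p x \<notin> p ` S}"
  have R_open: "openin E R"
    unfolding R_def using openin_outside_image[OF S local_sectionsD(1)[OF D]] .
  have "R \<subseteq> D" unfolding R_def by blast
  have "p ` R = p ` D \<inter> (topspace X - p ` S)"
    unfolding R_def using local_sectionsD(4)[OF D] image_topspace by auto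
  moreover have "closedin X (topspace X - p ` S)"
    using local_sectionsD(6)[OF S] by blast
  ultimately have "closedin X (p ` R)"
    using local_sectionsD(7)[OF D] by (simp add: closedin_Int)
  then have "compactin X (p ` R)"
    using closed_compactin[OF local_sectionsD(5)[OF D]] \<open>R \<subseteq> D\<close> by blast
  then have R_compact: "compactin E R"
    using compactin_subset_open_section[OF local_sectionsD(1,3)[OF D] \<open>R \<subseteq> D\<close>] by blast
  have "inj_on p R"
    using local_sectionsD(3)[OF D] \<open>R \<subseteq> D\<close> by (rule inj_on_subset)
  moreover have "p ` R \<inter> p ` S = {}"
    unfolding R_def by blast
  then have "p ` (S - R) \<inter> p ` (R - S) = {}"
    by blast
  ultimately have "inj_on p (S \<union> R)"
    using local_sectionsD(3)[OF S] inj_on_Un by blast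
  then show "S \<union> R \<in> sections"
    using R_open R_compact local_sectionsD(1,2)[OF S] compactin_Un unfolding local_sections_def by blast
  show "p ` (S \<union> R) = p ` S \<union> p ` D"
    unfolding R_def by blast
qed

lemma section_over_finite_union:
  assumes "finite \<D>" "\<D> \<subseteq> sections"
  shows "\<exists>S\<in>sections. p ` S = \<Union>((\<lambda>D. p ` D) ` \<D>)"
  using assms
proof (induction \<D> rule: finite_induct)
  case empty
  show ?case using empty_in_sections by (intro bexI[of _ "{}"]) simp_all
next
  case (insert D \<D>)
  then obtain S where S: "S \<in> sections" "p ` S = \<Union>((\<lambda>D. p ` D) ` \<D>)" by auto
  have D: "D \<in> sections" using insert.prems by blast
  show ?case
    using section_union_outside[OF S(1) D] S(2) by (intro bexI) auto
qed

lemma section_over_compact_open: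
  assumes B: "compactin X B" "openin X B"
  shows "\<exists>S\<in>sections. p ` S = B"
proof -
  let ?\<U> = "(\<lambda>D. p ` D) ` {D \<in> sections. p ` D \<subseteq> B}"
  have "B \<subseteq> \<Union>?\<U>"
  proof
    fix x assume x: "x \<in> B"
    then obtain e where e: "e \<in> topspace E" "x = p e"
      using openin_subset[OF B(2)] image_topspace by blast
    then have "e \<in> {y \<in> topspace E. p y \<in> B}" using x by blast
    then obtain D where "D \<in> sections" "e \<in> D" "D \<subseteq> {y \<in> topspace E. p y \<in> B}"
      using sections_base[OF openin_preimage[OF B(2)]] by blast
    then show "x \<in> \<Union>?\<U>"
      using e(2) by blast
  qed
  moreover have "openin X U" if "U \<in> ?\<U>" for U
    using that local_sectionsD(6) by blast
  ultimately obtain \<F> where \<F>: "finite \<F>" "\<F> \<subseteq> ?\<U>" "B \<subseteq> \<Union>\<F>"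
    using compactinD[OF B(1), of ?\<U>] by blast
  obtain \<D> where \<D>: "\<D> \<subseteq> {D \<in> sections. p ` D \<subseteq> B}" "finite \<D>" "\<F> = (\<lambda>D. p ` D) ` \<D>"
    using finite_subset_image[OF \<F>(1,2)] by blast
  obtain S where S: "S \<in> sections" "p ` S = \<Union>((\<lambda>D. p ` D) ` \<D>)"
    using section_over_finite_union[OF \<D>(2)] \<D>(1) by blast
  have "p ` S = B"
    using S(2) \<D>(1,3) \<F>(3) by blast
  then show ?thesis using S(1) by blast
qed

definition sections_through :: "'a \<Rightarrow> 'a set set" where
  "sections_through a = {C \<in> sections. a \<in> C}"

lemma pfilter_sections_through:
  assumes a: "a \<in> topspace E"
  shows "pfilter sections (\<subseteq>) (sections_through a)"
  unfolding pfilter_def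
proof (intro conjI ballI impI)
  show "sections_through a \<subseteq> sections" "sections_through a \<noteq> {}"
    using sections_base[OF openin_topspace a] unfolding sections_through_def by auto
  show "sections_through a \<noteq> sections"
    using empty_in_sections unfolding sections_through_def by blast
  show "c \<in> sections_through a" if "b \<in> sections_through a" "c \<in> sections" "b \<subseteq> c" for b c
    using that unfolding sections_through_def by auto
  show "\<exists>c\<in>sections_through a. c \<subseteq> b \<and> c \<subseteq> d"
    if "b \<in> sections_through a" "d \<in> sections_through a" for b d
    using that sections_base[of "b \<inter> d" a] local_sectionsD(1)
    unfolding sections_through_def by auto
qed

lemma sections_through_ultrafilter:
  assumes a: "a \<in> topspace E"
  shows "sections_through a \<in> ultrafilters sections (\<subseteq>)"
  unfolding ultrafilters_def
proof (intro CollectI conjI allI impI pfilter_sections_through[OF a])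
  fix G assume G: "pfilter sections (\<subseteq>) G \<and> sections_through a \<subseteq> G"
  then have G_sub: "G \<subseteq> sections"
    and dir: "\<And>b d. b \<in> G \<Longrightarrow> d \<in> G \<Longrightarrow> \<exists>c\<in>G. c \<subseteq> b \<and> c \<subseteq> d"
    unfolding pfilter_def by blast+
  have empty_notin: "{} \<notin> G"
    using G pfilter_empty_notin[OF _ empty_in_sections] by blast
  have "C \<in> sections_through a" if C: "C \<in> G" for C
  proof (rule ccontr)
    assume "C \<notin> sections_through a"
    then have "a \<notin> C" using C G_sub unfolding sections_through_def by blast
    obtain D where D: "D \<in> sections" "a \<in> D"
      using sections_base[OF openin_topspace a] by blast
    then have "D \<in> G" using G unfolding sections_through_def by blast
    then obtain c where c: "c \<in> G" "c \<subseteq> C" "c \<subseteq> D"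
      using dir C by blast
    have "p a \<notin> p ` c"
      using \<open>a \<notin> C\<close> c(2,3) D local_sectionsD(3)[OF D(1)] by (auto simp: inj_on_def)
    then have "a \<in> {x \<in> D. p x \<notin> p ` c}" using D(2) by blast
    then obtain D' where D': "D' \<in> sections" "a \<in> D'" "D' \<subseteq> {x \<in> D. p x \<notin> p ` c}"
      using sections_base[OF openin_outside_image[OF _ local_sectionsD(1)[OF D(1)]]]
        c(1) G_sub by blast
    then have "D' \<in> G" using G unfolding sections_through_def by blast
    then obtain e where "e \<in> G" "e \<subseteq> c" "e \<subseteq> D'" using dir c(1) by blast
    moreover have "c \<inter> D' = {}" using D'(3) by blast
    ultimately have "e = {}" by blast
    then show False using \<open>e \<in> G\<close> empty_notin by simp
  qed
  then show "G = sections_through a" using G by blast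
qed

lemma ultrafilter_eq_sections_through:
  assumes G: "G \<in> ultrafilters sections (\<subseteq>)"
  obtains a where "a \<in> topspace E" "G = sections_through a"
proof -
  have G_filter: "pfilter sections (\<subseteq>) G"
    and G_max: "\<And>H. pfilter sections (\<subseteq>) H \<Longrightarrow> G \<subseteq> H \<Longrightarrow> H = G"
    using G unfolding ultrafilters_def by auto
  then have G_sub: "G \<subseteq> sections" and "G \<noteq> {}"
    and dir: "\<And>b d. b \<in> G \<Longrightarrow> d \<in> G \<Longrightarrow> \<exists>c\<in>G. c \<subseteq> b \<and> c \<subseteq> d"
    unfolding pfilter_def by auto
  then obtain C where C: "C \<in> G" "C \<in> sections" by blast
  let ?\<U> = "(\<lambda>d. p ` d) ` {d \<in> G. d \<subseteq> C}"
  have "p ` C \<inter> \<Inter>\<F> \<noteq> {}" if \<F>: "finite \<F>" "\<F> \<subseteq> ?\<U>" for \<F>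
  proof -
    obtain \<F>' where \<F>': "\<F>' \<subseteq> {d \<in> G. d \<subseteq> C}" "finite \<F>'" "\<F> = (\<lambda>d. p ` d) ` \<F>'"
      using finite_subset_image[OF \<F>] by blast
    then have "finite (insert C \<F>')" "insert C \<F>' \<subseteq> G" using C(1) by auto
    then obtain e where e: "e \<in> G" "\<forall>d\<in>insert C \<F>'. e \<subseteq> d"
      by (metis pfilter_finite_lower_bound[OF G_filter])
    moreover have "e \<noteq> {}"
      using pfilter_empty_notin[OF G_filter empty_in_sections] e(1) by blast
    ultimately have "p ` e \<noteq> {}" "p ` e \<subseteq> p ` C \<inter> \<Inter>\<F>"
      using \<F>'(3) by auto
    then show ?thesis by blast
  qed
  moreover have "closedin X K" if "K \<in> ?\<U>" for K
    using that G_sub local_sectionsD(7) by blast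
  ultimately have "p ` C \<inter> \<Inter>?\<U> \<noteq> {}"
    using compactin_fip[THEN iffD1, OF local_sectionsD(5)[OF C(2)], THEN conjunct2, rule_format, of ?\<U>]
    by blast
  then obtain a where a: "a \<in> C" "\<And>d. d \<in> G \<Longrightarrow> d \<subseteq> C \<Longrightarrow> p a \<in> p ` d"
    by blast
  have "G \<subseteq> sections_through a"
  proof
    fix e assume "e \<in> G"
    then obtain d where d: "d \<in> G" "d \<subseteq> e" "d \<subseteq> C" using dir C(1) by blast
    then obtain a' where "a' \<in> d" "p a' = p a" using a(2) by force
    then have "a' = a"
      using local_sectionsD(3)[OF C(2)] d(3) a(1) by (auto dest: inj_onD)
    then show "e \<in> sections_through a"
      using \<open>a' \<in> d\<close> d(2) \<open>e \<in> G\<close> G_sub unfolding sections_through_def by auto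
  qed
  moreover have "a \<in> topspace E" using a(1) local_sectionsD(4)[OF C(2)] by blast
  ultimately have "G = sections_through a"
    using G_max pfilter_sections_through by blast
  then show thesis using that \<open>a \<in> topspace E\<close> by blast
qed

lemma inj_on_sections_through: "inj_on sections_through (topspace E)"
proof (rule inj_onI)
  fix a b assume a: "a \<in> topspace E" and b: "b \<in> topspace E"
    and eq: "sections_through a = sections_through b"
  obtain W where W: "openin E W" "a \<in> W" "b \<in> W \<Longrightarrow> p a = p b"
  proof (cases "p a = p b")
    case True
    then show ?thesis using that[OF openin_topspace a] by blast
  next
    case False
    have "p a \<in> topspace X" "p b \<in> topspace X"
      using a b image_topspace by blast+
    then obtain V V' where V: "openin X V" "openin X V'" "p a \<in> V" "p b \<in> V'" "disjnt V V'"
      using Hausdorff_base False unfolding Hausdorff_space_def by metis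
    then have "p b \<notin> V" by (auto simp: disjnt_def)
    then show ?thesis
      using that[OF openin_preimage[OF V(1)]] a V(3) by blast
  qed
  then obtain D where D: "D \<in> sections" "a \<in> D" "D \<subseteq> W"
    using sections_base by blast
  then have "b \<in> D"
    using eq unfolding sections_through_def by blast
  then show "a = b"
    using W D local_sectionsD(3)[OF D(1)] by (blast dest: inj_onD)
qed

lemma ultrafilters_containing_eq_image:
  assumes c: "c \<in> sections"
  shows "{G \<in> ultrafilters sections (\<subseteq>). c \<in> G} = sections_through ` c"
proof
  show "sections_through ` c \<subseteq> {G \<in> ultrafilters sections (\<subseteq>). c \<in> G}"
    using sections_through_ultrafilter local_sectionsD(4)[OF c] c
    unfolding sections_through_def by blast
  show "{G \<in> ultrafilters sections (\<subseteq>). c \<in> G} \<subseteq> sections_through ` c"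
  proof
    fix G assume G: "G \<in> {G \<in> ultrafilters sections (\<subseteq>). c \<in> G}"
    then obtain a where "G = sections_through a"
      using ultrafilter_eq_sections_through by blast
    then show "G \<in> sections_through ` c"
      using G unfolding sections_through_def by blast
  qed
qed

lemma homeomorphic_map_sections_through: "homeomorphic_map E (dual_E_top E p) sections_through"
proof -
  have "dual_E_top E p = topology_generated_by ((\<lambda>c. sections_through ` c) ` sections)"
    unfolding dual_E_top_def by (rule arg_cong[OF image_cong[OF refl ultrafilters_containing_eq_image]])
  then show ?thesis
    using homeomorphic_map_topology_generated_by_image_base[OF local_sectionsD(1) sections_base
        inj_on_sections_through] by simp
qed

lemma dual_proj_sections_through:
  assumes a: "a \<in> topspace E"
  shows "dual_proj p (sections_through a) = {B \<in> compact_opens X. p a \<in> B}"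
proof
  show "dual_proj p (sections_through a) \<subseteq> {B \<in> compact_opens X. p a \<in> B}"
  proof
    fix B assume "B \<in> dual_proj p (sections_through a)"
    then obtain C where "C \<in> sections" "a \<in> C" "B = p ` C"
      unfolding dual_proj_def sections_through_def by blast
    then show "B \<in> {B \<in> compact_opens X. p a \<in> B}"
      using local_sectionsD(5,6) unfolding compact_opens_def by blast
  qed
  show "{B \<in> compact_opens X. p a \<in> B} \<subseteq> dual_proj p (sections_through a)"
  proof
    fix B assume "B \<in> {B \<in> compact_opens X. p a \<in> B}"
    then have B: "compactin X B" "openin X B" "p a \<in> B"
      unfolding compact_opens_def by auto
    have "a \<in> {y \<in> topspace E. p y \<in> B}" using a B(3) by blast
    then obtain D where D: "D \<in> sections" "a \<in> D" "D \<subseteq> {y \<in> topspace E. p y \<in> B}"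
      using sections_base[OF openin_preimage[OF B(2)]] by blast
    obtain S where S: "S \<in> sections" "p ` S = B"
      using section_over_compact_open B by blast
    define C where "C = D \<union> {x \<in> S. p x \<notin> p ` D}"
    have "C \<in> sections_through a"
      using section_union_outside(1)[OF D(1) S(1)] D(2) unfolding C_def sections_through_def by blast
    moreover have "p ` D \<subseteq> B" using D(3) by blast
    then have "B = p ` C"
      using section_union_outside(2)[OF D(1) S(1)] S(2) unfolding C_def by blast
    ultimately show "B \<in> dual_proj p (sections_through a)"
      unfolding dual_proj_def by (rule rev_image_eqI)
  qed
qed

end

lemma etale_space_id: "etale_space X id X"
  unfolding etale_space_def by (auto intro!: exI[of _ "topspace X"] simp: homeomorphic_map_id)

theorem proposition3p14:
  fixes E :: "'a topology" and X :: "'b topology" and p :: "'a \<Rightarrow> 'b"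
  assumes "etale_space E p X" and "boolean_space X"
  shows "homeomorphic_map E (dual_E_top E p) (\<lambda>a. {C \<in> local_sections E p. a \<in> C}) \<and>
         homeomorphic_map X (dual_X_top X) (\<lambda>u. {B \<in> compact_opens X. u \<in> B}) \<and>
         (\<forall>a\<in>topspace E. dual_proj p {C \<in> local_sections E p. a \<in> C} =
                           {B \<in> compact_opens X. p a \<in> B})"
proof -
  interpret E: boolean_etale E p X
    using assms by unfold_locales
  interpret X: boolean_etale X id X
    using etale_space_id assms(2) by unfold_locales
  have sections_id: "local_sections X id = compact_opens X"
    unfolding local_sections_def compact_opens_def by simp
  have "dual_E_top X id = dual_X_top X"
    unfolding dual_E_top_def dual_X_top_def sections_id ..
  then have "homeomorphic_map X (dual_X_top X) (\<lambda>u. {B \<in> compact_opens X. u \<in> B})"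
    using X.homeomorphic_map_sections_through unfolding X.sections_through_def sections_id by simp
  moreover have "(\<lambda>a. {C \<in> local_sections E p. a \<in> C}) = E.sections_through"
    unfolding E.sections_through_def ..
  ultimately show ?thesis
    using E.homeomorphic_map_sections_through E.dual_proj_sections_through by metis
qed

end
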